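(* In $\mathrm{Leib}$, for every $n\ge1$, $0\le i\le n$ and $0\le j\le n-1$: \[ \rho_i^n\chi_j^n=\begin{cases} \chi_{j+1}^{n+1}\rho_i^n & \text{if } j>i,\\ \chi_{i+1}^{n+1}\chi_i^{n+1}\rho_{i+1}^n-\chi_{i+1}^{n+1}\chi_i^{n+1}\chi_{i+1}^{n+1}\rho_i^n+\chi_i^{n+1}\chi_{i+1}^{n+1}\rho_{i-1}^n & \text{if } j=i,\\ \chi_j^{n+1}\rho_i^n & \text{if } j<i. \end{cases}\]
   Context: Let $\Bbbk$ be a field and $\mathbb{K}=\bigoplus_{n\in\mathbb N}\Bbbk1_n$ with $1_n1_m=\delta_{nm}1_n$. A $\mathbb K$-algebra is the categorical algebra of a small $\Bbbk$-linear category with object set $\mathbb N$ (a doubly graded algebra $\bigoplus_{n,m}V_{n,m}$ with local units $1_n$). Generators: $\partial^n_j$ ($n\ge0$, $0\le j\le n$) of bidegree $(n+1,n)$ (a morphism $n\to n+1$) and $\chi^n_i$ ($n\ge1$, $0\le i\le n-1$) of bidegree $(n,n)$; products with mismatched degrees are $0$. $\mathrm{Mag}$ is the free $\mathbb K$-algebra on the $\partial^n_j$ modulo $\partial^{n+1}_i\partial^n_j=\partial^{n+1}_{j+1}\partial^n_i$ for $0\le i<j\le n$. $\mathrm{Sym}$ is the free $\mathbb K$-algebra on the $\chi^n_i$ modulo $\chi^n_i\chi^n_j=\chi^n_j\chi^n_i$ ($|i-j|\ge2$), $\chi^n_i\chi^n_{i+1}\chi^n_i=\chi^n_{i+1}\chi^n_i\chi^n_{i+1}$,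 $\chi^n_i\chi^n_i=1_n$; thus $1_n\mathrm{Sym}1_n\cong\Bbbk[S_{n+1}]$. $\mathrm{Sym}\otimes_\zeta\mathrm{Mag}$ is the $\mathbb K$-algebra generated by $\mathrm{Sym}$ and $\mathrm{Mag}$ with underlying bimodule $\mathrm{Sym}\otimes_{\mathbb K}\mathrm{Mag}$ and additional commutation relations $\partial_i^n\chi_j^n=\chi^{n+1}_{j+1}\partial^n_i$ if $i<j$; $=\chi^{n+1}_{i+1}\chi^{n+1}_i\partial^n_{i+1}$ if $i=j$; $=\chi^{n+1}_{i-1}\chi^{n+1}_i\partial^n_{i-1}$ if $i=j+1$; $=\chi^{n+1}_j\partial^n_i$ if $i>j+1$. $\mathrm{Leib}$ is the quotient of $\mathrm{Sym}\otimes_\zeta\mathrm{Mag}$ by the ideal generated by $\partial^{n+1}_{j+1}\partial^n_j-(1_{n+2}-\chi^{n+2}_{j+1})\partial^{n+1}_j\partial^n_j$, $0\le j\le n$, $n\ge0$. In $\mathrm{Leib}$, $\rho^n_{-1}:=0$ and $\rho^n_j:=\partial^n_j+\sum_{a=1}^j\chi^{n+1}_j\cdots\chi^{n+1}_a\partial^n_{a-1}$ for $0\le j\le n$ (equivalently $\rho^n_{j+1}=\partial^n_{j+1}+\chi^{n+1}_{j+1}\rho^n_j$). *)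

theory Defs
  imports Main "HOL-Library.Poly_Mapping"
begin

text \<open>Generators: D n j is the generator partial^n_j (a morphism n -> n+1, valid for j \<le> n);
  X n i is the generator chi^n_i (a morphism n -> n, valid for n \<ge> 1 and i \<le> n - 1).\<close>
datatype gen = D nat nat | X nat nat

fun gen_valid :: "gen \<Rightarrow> bool" where
  "gen_valid (D n j) = (j \<le> n)"
| "gen_valid (X n i) = (1 \<le> n \<and> i + 1 \<le> n)"

fun gen_src :: "gen \<Rightarrow> nat" where
  "gen_src (D n j) = n"
| "gen_src (X n i) = n"

fun gen_tgt :: "gen \<Rightarrow> nat" where
  "gen_tgt (D n j) = Suc n"
| "gen_tgt (X n i) = n"

text \<open>A path is a word in the generators together with its source object.  The word
  g_1 g_2 ... g_k stands for the product g_1 g_2 ... g_k (so g_k is applied first);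
  the empty word at object m stands for the local unit 1_m.\<close>
type_synonym path = "gen list \<times> nat"

fun wtgt :: "gen list \<Rightarrow> nat \<Rightarrow> nat" where
  "wtgt [] m = m"
| "wtgt (g # w) m = gen_tgt g"

fun wvalid :: "gen list \<Rightarrow> nat \<Rightarrow> bool" where
  "wvalid [] m = True"
| "wvalid (g # w) m = (gen_valid g \<and> gen_src g = wtgt w m \<and> wvalid w m)"

definition pvalid :: "path \<Rightarrow> bool" where
  "pvalid p = wvalid (fst p) (snd p)"

definition ptgt :: "path \<Rightarrow> nat" where
  "ptgt p = wtgt (fst p) (snd p)"

text \<open>Composition (product) of paths; products with mismatched degrees are zero (None).\<close>
definition pcomp :: "path \<Rightarrow> path \<Rightarrow> path option" where
  "pcomp p q = (if pvalid p \<and> pvalid q \<and> snd p = ptgt q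
                then Some (fst p @ fst q, snd q) else None)"

text \<open>The free K-algebra (free algebra of the free linear category on the quiver of generators):
  finitely supported k-linear combinations of paths, with bilinearly extended product.\<close>
type_synonym 'k falg = "path \<Rightarrow>\<^sub>0 'k"

definition fmul :: "'k::field falg \<Rightarrow> 'k falg \<Rightarrow> 'k falg" (infixl "\<cdot>" 70) where
  "fmul x y = (\<Sum>p\<in>Poly_Mapping.keys x. \<Sum>q\<in>Poly_Mapping.keys y.
      (case pcomp p q of None \<Rightarrow> 0
       | Some r \<Rightarrow> Poly_Mapping.single r (Poly_Mapping.lookup x p * Poly_Mapping.lookup y q)))"

definition unit_el :: "nat \<Rightarrow> 'k::field falg" ("\<one>") where
  "unit_el n = Poly_Mapping.single ([], n) 1"

definition gen_el :: "gen \<Rightarrow> 'k::field falg" where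
  "gen_el g = Poly_Mapping.single ([g], gen_src g) 1"

abbreviation dd :: "nat \<Rightarrow> nat \<Rightarrow> 'k::field falg" ("\<partial>") where
  "dd n j \<equiv> gen_el (D n j)"

abbreviation chi :: "nat \<Rightarrow> nat \<Rightarrow> 'k::field falg" ("\<chi>") where
  "chi n i \<equiv> gen_el (X n i)"

text \<open>Defining relations of Leib (each listed as an element r meaning r = 0).\<close>
definition leib_rels :: "'k::field falg set" where
  "leib_rels =
     \<comment> \<open>Mag\<close>
     {\<partial> (Suc n) i \<cdot> \<partial> n j - \<partial> (Suc n) (Suc j) \<cdot> \<partial> n i | n i j. i < j \<and> j \<le> n}
   \<union> \<comment> \<open>Sym\<close>
     {\<chi> n i \<cdot> \<chi> n j - \<chi> n j \<cdot> \<chi> n i | n i j. 1 \<le> n \<and> i + 1 \<le> n \<and> j + 1 \<le> n \<and> i + 2 \<le> j}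
   \<union> {\<chi> n i \<cdot> \<chi> n (Suc i) \<cdot> \<chi> n i - \<chi> n (Suc i) \<cdot> \<chi> n i \<cdot> \<chi> n (Suc i) | n i. i + 2 \<le> n}
   \<union> {\<chi> n i \<cdot> \<chi> n i - \<one> n | n i. 1 \<le> n \<and> i + 1 \<le> n}
   \<union> \<comment> \<open>commutation relations of Sym \<otimes>_zeta Mag\<close>
     {\<partial> n i \<cdot> \<chi> n j - \<chi> (Suc n) (Suc j) \<cdot> \<partial> n i | n i j. 1 \<le> n \<and> i \<le> n \<and> j + 1 \<le> n \<and> i < j}
   \<union> {\<partial> n i \<cdot> \<chi> n i - \<chi> (Suc n) (Suc i) \<cdot> \<chi> (Suc n) i \<cdot> \<partial> n (Suc i) | n i. 1 \<le> n \<and> i + 1 \<le> n}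
   \<union> {\<partial> n (Suc j) \<cdot> \<chi> n j - \<chi> (Suc n) j \<cdot> \<chi> (Suc n) (Suc j) \<cdot> \<partial> n j | n j. 1 \<le> n \<and> j + 1 \<le> n}
   \<union> {\<partial> n i \<cdot> \<chi> n j - \<chi> (Suc n) j \<cdot> \<partial> n i | n i j. 1 \<le> n \<and> i \<le> n \<and> j + 1 \<le> n \<and> j + 1 < i}
   \<union> \<comment> \<open>Leib relation\<close>
     {\<partial> (Suc n) (Suc j) \<cdot> \<partial> n j - (\<one> (n+2) - \<chi> (n+2) (Suc j)) \<cdot> \<partial> (Suc n) j \<cdot> \<partial> n j | n j. j \<le> n}"

inductive_set ideal_of :: "'k::field falg set \<Rightarrow> 'k falg set" for R where
  zero: "0 \<in> ideal_of R"
| add: "x \<in> ideal_of R \<Longrightarrow> y \<in> ideal_of R \<Longrightarrow> x + y \<in> ideal_of R"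
| gen: "r \<in> R \<Longrightarrow> a \<cdot> r \<cdot> b \<in> ideal_of R"

definition leib_eq :: "'k::field falg \<Rightarrow> 'k falg \<Rightarrow> bool" (infix "\<equiv>\<^sub>L" 50) where
  "x \<equiv>\<^sub>L y \<longleftrightarrow> x - y \<in> ideal_of leib_rels"

fun rho :: "nat \<Rightarrow> nat \<Rightarrow> 'k::field falg" where
  "rho n 0 = \<partial> n 0"
| "rho n (Suc j) = \<partial> n (Suc j) + \<chi> (Suc n) (Suc j) \<cdot> rho n j"

definition rho_pred :: "nat \<Rightarrow> nat \<Rightarrow> 'k::field falg" where
  "rho_pred n i = (if i = 0 then 0 else rho n (i - 1))"

end

theory Submission
  imports Defs
begin

text \<open>Expand \<open>\<rho>\<^sub>i = \<partial>\<^sub>i + \<chi>\<^sub>i \<rho>\<^sub>i\<^sub>-\<^sub>1\<close> and move \<open>\<chi>\<^sub>j\<close> to the left through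
  each summand with the commutation relations of \<open>Sym \<otimes>\<^sub>\<zeta> Mag\<close>, by induction on \<open>i\<close>.
  For \<open>j > i\<close> the two \<open>\<chi>\<close>'s that appear are far apart and commute.  For \<open>j = i\<close> the
  relation for \<open>\<partial>\<^sub>i \<chi>\<^sub>i\<close> handles the first summand and the case \<open>j > i - 1\<close> the
  second.  For \<open>j < i\<close> the only new situation is \<open>i = j + 1\<close>, where the diagonal case,
  the braid relation and \<open>\<chi>\<^sub>j\<^sub>+\<^sub>1\<^sup>2 = 1\<close> reassemble \<open>\<chi>\<^sub>j \<rho>\<^sub>j\<^sub>+\<^sub>1\<close>.\<close>

subsection \<open>Bilinearity and associativity of the path product\<close>

definition basis_mul :: "path \<Rightarrow> path \<Rightarrow> 'k::field \<Rightarrow> 'k falg" where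
  "basis_mul p q c = (case pcomp p q of None \<Rightarrow> 0 | Some r \<Rightarrow> Poly_Mapping.single r c)"

lemma basis_mul_0 [simp]: "basis_mul p q 0 = 0"
  by (simp add: basis_mul_def split: option.splits)

lemma basis_mul_add: "basis_mul p q (a + b) = basis_mul p q a + basis_mul p q b"
  by (simp add: basis_mul_def single_add split: option.splits)

lemma fmul_eq_sum_over_supersets:
  assumes "finite S" "Poly_Mapping.keys x \<subseteq> S" "finite U" "Poly_Mapping.keys y \<subseteq> U"
  shows "x \<cdot> y = (\<Sum>p\<in>S. \<Sum>q\<in>U. basis_mul p q (Poly_Mapping.lookup x p * Poly_Mapping.lookup y q))"
proof -
  have "x \<cdot> y = (\<Sum>p\<in>Poly_Mapping.keys x. \<Sum>q\<in>Poly_Mapping.keys y.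
      basis_mul p q (Poly_Mapping.lookup x p * Poly_Mapping.lookup y q))"
    unfolding fmul_def basis_mul_def by simp
  also have "\<dots> = (\<Sum>p\<in>Poly_Mapping.keys x. \<Sum>q\<in>U.
      basis_mul p q (Poly_Mapping.lookup x p * Poly_Mapping.lookup y q))"
    by (intro sum.cong refl sum.mono_neutral_left) (use assms in \<open>auto simp: in_keys_iff\<close>)
  also have "\<dots> = (\<Sum>p\<in>S. \<Sum>q\<in>U. basis_mul p q (Poly_Mapping.lookup x p * Poly_Mapping.lookup y q))"
    by (rule sum.mono_neutral_left) (use assms in \<open>auto simp: in_keys_iff\<close>)
  finally show ?thesis .
qed

lemma fmul_single_single:
  "Poly_Mapping.single p a \<cdot> Poly_Mapping.single q b = basis_mul p q (a * b)"
  by (subst fmul_eq_sum_over_supersets[of "{p}" _ "{q}"]) auto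

lemma fmul_add_left: "(x + y) \<cdot> z = x \<cdot> z + y \<cdot> z"
proof -
  let ?S = "Poly_Mapping.keys x \<union> Poly_Mapping.keys y" and ?U = "Poly_Mapping.keys z"
  have "Poly_Mapping.keys (x + y) \<subseteq> ?S"
    by (rule keys_add)
  then show ?thesis
    by (simp add: fmul_eq_sum_over_supersets[of ?S _ ?U] lookup_add distrib_right
        basis_mul_add sum.distrib)
qed

lemma fmul_add_right: "z \<cdot> (x + y) = z \<cdot> x + z \<cdot> y"
proof -
  let ?S = "Poly_Mapping.keys z" and ?U = "Poly_Mapping.keys x \<union> Poly_Mapping.keys y"
  have "Poly_Mapping.keys (x + y) \<subseteq> ?U"
    by (rule keys_add)
  then show ?thesis
    by (simp add: fmul_eq_sum_over_supersets[of ?S _ ?U] lookup_add distrib_left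
        basis_mul_add sum.distrib)
qed

lemma fmul_zero_left [simp]: "0 \<cdot> x = 0"
  by (simp add: fmul_def)

lemma fmul_zero_right [simp]: "x \<cdot> 0 = 0"
  by (simp add: fmul_def)

lemma fmul_minus_left: "(- x) \<cdot> y = - (x \<cdot> y)"
  using fmul_add_left[of x "- x" y] by (simp add: eq_neg_iff_add_eq_0 add.commute)

lemma fmul_minus_right: "y \<cdot> (- x) = - (y \<cdot> x)"
  using fmul_add_right[of y x "- x"] by (simp add: eq_neg_iff_add_eq_0 add.commute)

lemma fmul_diff_left: "(x - y) \<cdot> z = x \<cdot> z - y \<cdot> z"
  using fmul_add_left[of x "- y" z] by (simp add: fmul_minus_left)

lemma fmul_diff_right: "z \<cdot> (x - y) = z \<cdot> x - z \<cdot> y"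
  using fmul_add_right[of z x "- y"] by (simp add: fmul_minus_right)

lemma fmul_sum_left: "sum f A \<cdot> y = (\<Sum>a\<in>A. f a \<cdot> y)"
  by (induction A rule: infinite_finite_induct) (auto simp: fmul_add_left)

lemma fmul_sum_right: "y \<cdot> sum f A = (\<Sum>a\<in>A. y \<cdot> f a)"
  by (induction A rule: infinite_finite_induct) (auto simp: fmul_add_right)

lemma wtgt_append: "wtgt (w @ v) m = wtgt w (wtgt v m)"
  by (induction w) auto

lemma wvalid_append: "wvalid (w @ v) m \<longleftrightarrow> wvalid w (wtgt v m) \<and> wvalid v m"
  by (induction w) (auto simp: wtgt_append)

lemma pcomp_Pair:
  "pcomp (w, m) (v, l) =
     (if wvalid w m \<and> wvalid v l \<and> m = wtgt v l then Some (w @ v, l) else None)"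
  by (auto simp: pcomp_def pvalid_def ptgt_def)

lemma bind_pcomp_left:
  "Option.bind (pcomp (w, m) (v, l)) (\<lambda>r. pcomp r (u, k)) =
     (if wvalid w m \<and> wvalid v l \<and> wvalid u k \<and> m = wtgt v l \<and> l = wtgt u k
      then Some (w @ v @ u, k) else None)"
  by (auto simp: pcomp_Pair wvalid_append wtgt_append)

lemma bind_pcomp_right:
  "Option.bind (pcomp (v, l) (u, k)) (pcomp (w, m)) =
     (if wvalid w m \<and> wvalid v l \<and> wvalid u k \<and> m = wtgt v l \<and> l = wtgt u k
      then Some (w @ v @ u, k) else None)"
  by (auto simp: pcomp_Pair wvalid_append wtgt_append)

lemma pcomp_assoc: "Option.bind (pcomp p q) (\<lambda>r. pcomp r s) = Option.bind (pcomp q s) (pcomp p)"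
  by (cases p; cases q; cases s) (simp only: bind_pcomp_left bind_pcomp_right)

lemma fmul_single_assoc:
  "Poly_Mapping.single p a \<cdot> Poly_Mapping.single q b \<cdot> Poly_Mapping.single s c
   = Poly_Mapping.single p a \<cdot> (Poly_Mapping.single q b \<cdot> Poly_Mapping.single s c)"
  using pcomp_assoc[of p q s]
  by (cases "pcomp p q"; cases "pcomp q s")
     (auto simp: fmul_single_single basis_mul_def mult.assoc split: option.splits)

lemma poly_mapping_sum_singles:
  "x = (\<Sum>p\<in>Poly_Mapping.keys x. Poly_Mapping.single p (Poly_Mapping.lookup x p))"
  by (rule poly_mapping_eqI) (auto simp: lookup_sum lookup_single when_def in_keys_iff
      intro: sum.neutral sum.delta'[THEN trans])

lemma fmul_assoc: "x \<cdot> y \<cdot> z = x \<cdot> (y \<cdot> z)"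
proof -
  let ?sum_singles = "\<lambda>x. \<Sum>p\<in>Poly_Mapping.keys x. Poly_Mapping.single p (Poly_Mapping.lookup x p)"
  have "x \<cdot> y \<cdot> z = ?sum_singles x \<cdot> ?sum_singles y \<cdot> ?sum_singles z"
    by (simp only: poly_mapping_sum_singles[symmetric])
  also have "\<dots> = ?sum_singles x \<cdot> (?sum_singles y \<cdot> ?sum_singles z)"
    by (simp only: fmul_sum_left fmul_sum_right fmul_single_assoc)
  also have "\<dots> = x \<cdot> (y \<cdot> z)"
    by (simp only: poly_mapping_sum_singles[symmetric])
  finally show ?thesis .
qed

lemma unit_fmul_gen:
  "gen_valid g \<Longrightarrow> gen_tgt g = m \<Longrightarrow> \<one> m \<cdot> (gen_el g :: 'k::field falg) = gen_el g"
  by (cases g) (auto simp: unit_el_def gen_el_def fmul_single_single basis_mul_def pcomp_Pair)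

lemma unit_fmul_gen_fmul:
  "gen_valid g \<Longrightarrow> gen_tgt g = m \<Longrightarrow> \<one> m \<cdot> ((gen_el g :: 'k::field falg) \<cdot> w) = gen_el g \<cdot> w"
  by (simp add: fmul_assoc[symmetric] unit_fmul_gen)

lemma gen_fmul_unit:
  "gen_valid g \<Longrightarrow> gen_src g = m \<Longrightarrow> (gen_el g :: 'k::field falg) \<cdot> \<one> m = gen_el g"
  by (cases g) (auto simp: unit_el_def gen_el_def fmul_single_single basis_mul_def pcomp_Pair)

lemma unit_fmul_unit: "\<one> m \<cdot> (\<one> m :: 'k::field falg) = \<one> m"
  by (simp add: unit_el_def fmul_single_single basis_mul_def pcomp_Pair)

lemmas unit_fmul_simps =
  unit_fmul_gen unit_fmul_gen_fmul gen_fmul_unit unit_fmul_unit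
  fmul_assoc fmul_diff_left fmul_diff_right

subsection \<open>Congruence modulo the relations of \<open>Leib\<close>\<close>

lemma ideal_of_uminus: "x \<in> ideal_of R \<Longrightarrow> - x \<in> ideal_of R"
proof (induction rule: ideal_of.induct)
  case (add x y)
  then show ?case using ideal_of.add[of "- x" R "- y"] by (simp add: add.commute)
next
  case (gen r a b)
  then show ?case using ideal_of.gen[of r R "- a" b] by (simp add: fmul_minus_left)
qed (simp add: ideal_of.zero)

lemma ideal_of_fmul_left: "x \<in> ideal_of R \<Longrightarrow> c \<cdot> x \<in> ideal_of R"
proof (induction rule: ideal_of.induct)
  case (add x y)
  then show ?case by (simp add: fmul_add_right ideal_of.add)
next
  case (gen r a b)
  then show ?case using ideal_of.gen[of r R "c \<cdot> a" b] by (simp add: fmul_assoc)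
qed (simp add: ideal_of.zero)

lemma ideal_of_fmul_right: "x \<in> ideal_of R \<Longrightarrow> x \<cdot> c \<in> ideal_of R"
proof (induction rule: ideal_of.induct)
  case (add x y)
  then show ?case by (simp add: fmul_add_left ideal_of.add)
next
  case (gen r a b)
  then show ?case using ideal_of.gen[of r R a "b \<cdot> c"] by (simp add: fmul_assoc)
qed (simp add: ideal_of.zero)

lemma leib_eq_refl: "x \<equiv>\<^sub>L x"
  by (simp add: leib_eq_def ideal_of.zero)

lemma leib_eq_sym: "x \<equiv>\<^sub>L y \<Longrightarrow> y \<equiv>\<^sub>L x"
  unfolding leib_eq_def using ideal_of_uminus by fastforce

lemma leib_eq_trans [trans]: "x \<equiv>\<^sub>L y \<Longrightarrow> y \<equiv>\<^sub>L z \<Longrightarrow> x \<equiv>\<^sub>L z"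
  unfolding leib_eq_def using ideal_of.add by fastforce

lemma leib_eq_add: "a \<equiv>\<^sub>L b \<Longrightarrow> c \<equiv>\<^sub>L d \<Longrightarrow> a + c \<equiv>\<^sub>L b + d"
  unfolding leib_eq_def using ideal_of.add by (fastforce simp: algebra_simps)

lemma leib_eq_fmul_left: "a \<equiv>\<^sub>L b \<Longrightarrow> c \<cdot> a \<equiv>\<^sub>L c \<cdot> b"
  unfolding leib_eq_def using ideal_of_fmul_left by (fastforce simp: fmul_diff_right)

lemma leib_eq_fmul_right: "a \<equiv>\<^sub>L b \<Longrightarrow> a \<cdot> c \<equiv>\<^sub>L b \<cdot> c"
  unfolding leib_eq_def using ideal_of_fmul_right by (fastforce simp: fmul_diff_left)

text \<open>The ideal only contains two-sided multiples \<open>a r b\<close>; a relation lies in it because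
  it is fixed by the local units at its ends.\<close>
lemma leib_eq_of_rel:
  assumes "x - y \<in> leib_rels" and "\<one> m \<cdot> (x - y) \<cdot> \<one> l = x - y"
  shows "x \<equiv>\<^sub>L y"
  using ideal_of.gen[OF assms(1), of "\<one> m" "\<one> l"] assms(2) by (simp add: leib_eq_def)

lemma dd_chi_above:
  assumes "1 \<le> n" "i < j" "j + 1 \<le> n"
  shows "(\<partial> n i :: 'k::field falg) \<cdot> \<chi> n j \<equiv>\<^sub>L \<chi> (Suc n) (Suc j) \<cdot> \<partial> n i"
proof (rule leib_eq_of_rel)
  have "i \<le> n" using assms by simp
  then show "\<partial> n i \<cdot> \<chi> n j - \<chi> (Suc n) (Suc j) \<cdot> \<partial> n i \<in> (leib_rels :: 'k falg set)"
    using assms unfolding leib_rels_def by blast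
  show "\<one> (Suc n) \<cdot> (\<partial> n i \<cdot> \<chi> n j - \<chi> (Suc n) (Suc j) \<cdot> \<partial> n i) \<cdot> \<one> n
      = (\<partial> n i \<cdot> \<chi> n j - \<chi> (Suc n) (Suc j) \<cdot> \<partial> n i :: 'k falg)"
    using \<open>i \<le> n\<close> assms by (simp add: unit_fmul_simps)
qed

lemma dd_chi_diag:
  assumes "i + 1 \<le> n"
  shows "(\<partial> n i :: 'k::field falg) \<cdot> \<chi> n i \<equiv>\<^sub>L \<chi> (Suc n) (Suc i) \<cdot> \<chi> (Suc n) i \<cdot> \<partial> n (Suc i)"
proof (rule leib_eq_of_rel)
  have "1 \<le> n" using assms by simp
  then show "\<partial> n i \<cdot> \<chi> n i - \<chi> (Suc n) (Suc i) \<cdot> \<chi> (Suc n) i \<cdot> \<partial> n (Suc i)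
      \<in> (leib_rels :: 'k falg set)"
    using assms unfolding leib_rels_def by blast
  show "\<one> (Suc n) \<cdot> (\<partial> n i \<cdot> \<chi> n i - \<chi> (Suc n) (Suc i) \<cdot> \<chi> (Suc n) i \<cdot> \<partial> n (Suc i)) \<cdot> \<one> n
      = (\<partial> n i \<cdot> \<chi> n i - \<chi> (Suc n) (Suc i) \<cdot> \<chi> (Suc n) i \<cdot> \<partial> n (Suc i) :: 'k falg)"
    using assms by (simp add: unit_fmul_simps)
qed

lemma dd_Suc_chi:
  assumes "j + 1 \<le> n"
  shows "(\<partial> n (Suc j) :: 'k::field falg) \<cdot> \<chi> n j \<equiv>\<^sub>L \<chi> (Suc n) j \<cdot> \<chi> (Suc n) (Suc j) \<cdot> \<partial> n j"
proof (rule leib_eq_of_rel)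
  have "1 \<le> n" using assms by simp
  then show "\<partial> n (Suc j) \<cdot> \<chi> n j - \<chi> (Suc n) j \<cdot> \<chi> (Suc n) (Suc j) \<cdot> \<partial> n j
      \<in> (leib_rels :: 'k falg set)"
    using assms unfolding leib_rels_def by blast
  show "\<one> (Suc n) \<cdot> (\<partial> n (Suc j) \<cdot> \<chi> n j - \<chi> (Suc n) j \<cdot> \<chi> (Suc n) (Suc j) \<cdot> \<partial> n j) \<cdot> \<one> n
      = (\<partial> n (Suc j) \<cdot> \<chi> n j - \<chi> (Suc n) j \<cdot> \<chi> (Suc n) (Suc j) \<cdot> \<partial> n j :: 'k falg)"
    using assms by (simp add: unit_fmul_simps)
qed

lemma dd_chi_below:
  assumes "j + 1 < i" "i \<le> n"
  shows "(\<partial> n i :: 'k::field falg) \<cdot> \<chi> n j \<equiv>\<^sub>L \<chi> (Suc n) j \<cdot> \<partial> n i"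
proof (rule leib_eq_of_rel)
  have "1 \<le> n" "j + 1 \<le> n" using assms by simp_all
  then show "\<partial> n i \<cdot> \<chi> n j - \<chi> (Suc n) j \<cdot> \<partial> n i \<in> (leib_rels :: 'k falg set)"
    using assms unfolding leib_rels_def by blast
  show "\<one> (Suc n) \<cdot> (\<partial> n i \<cdot> \<chi> n j - \<chi> (Suc n) j \<cdot> \<partial> n i) \<cdot> \<one> n
      = (\<partial> n i \<cdot> \<chi> n j - \<chi> (Suc n) j \<cdot> \<partial> n i :: 'k falg)"
    using \<open>j + 1 \<le> n\<close> assms by (simp add: unit_fmul_simps)
qed

lemma chi_commute:
  assumes "i + 2 \<le> j" "j + 1 \<le> m"
  shows "(\<chi> m i :: 'k::field falg) \<cdot> \<chi> m j \<equiv>\<^sub>L \<chi> m j \<cdot> \<chi> m i"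
proof (rule leib_eq_of_rel)
  have "1 \<le> m" "i + 1 \<le> m" using assms by simp_all
  then show "\<chi> m i \<cdot> \<chi> m j - \<chi> m j \<cdot> \<chi> m i \<in> (leib_rels :: 'k falg set)"
    using assms unfolding leib_rels_def by blast
  show "\<one> m \<cdot> (\<chi> m i \<cdot> \<chi> m j - \<chi> m j \<cdot> \<chi> m i) \<cdot> \<one> m = (\<chi> m i \<cdot> \<chi> m j - \<chi> m j \<cdot> \<chi> m i :: 'k falg)"
    using \<open>1 \<le> m\<close> \<open>i + 1 \<le> m\<close> assms by (simp add: unit_fmul_simps)
qed

lemma chi_braid:
  assumes "i + 2 \<le> m"
  shows "(\<chi> m i :: 'k::field falg) \<cdot> \<chi> m (Suc i) \<cdot> \<chi> m i \<equiv>\<^sub>L \<chi> m (Suc i) \<cdot> \<chi> m i \<cdot> \<chi> m (Suc i)"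
proof (rule leib_eq_of_rel)
  show "\<chi> m i \<cdot> \<chi> m (Suc i) \<cdot> \<chi> m i - \<chi> m (Suc i) \<cdot> \<chi> m i \<cdot> \<chi> m (Suc i)
      \<in> (leib_rels :: 'k falg set)"
    using assms unfolding leib_rels_def by blast
  show "\<one> m \<cdot> (\<chi> m i \<cdot> \<chi> m (Suc i) \<cdot> \<chi> m i - \<chi> m (Suc i) \<cdot> \<chi> m i \<cdot> \<chi> m (Suc i)) \<cdot> \<one> m
      = (\<chi> m i \<cdot> \<chi> m (Suc i) \<cdot> \<chi> m i - \<chi> m (Suc i) \<cdot> \<chi> m i \<cdot> \<chi> m (Suc i) :: 'k falg)"
    using assms by (simp add: unit_fmul_simps)
qed

lemma chi_square:
  assumes "i + 1 \<le> m"
  shows "(\<chi> m i :: 'k::field falg) \<cdot> \<chi> m i \<equiv>\<^sub>L \<one> m"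
proof (rule leib_eq_of_rel)
  have "1 \<le> m" using assms by simp
  then show "\<chi> m i \<cdot> \<chi> m i - \<one> m \<in> (leib_rels :: 'k falg set)"
    using assms unfolding leib_rels_def by blast
  show "\<one> m \<cdot> (\<chi> m i \<cdot> \<chi> m i - \<one> m) \<cdot> \<one> m = (\<chi> m i \<cdot> \<chi> m i - \<one> m :: 'k falg)"
    using \<open>1 \<le> m\<close> assms by (simp add: unit_fmul_simps)
qed

subsection \<open>Moving \<open>\<chi>\<close> across \<open>\<rho>\<close>\<close>

lemma rho_eq_dd_plus_rho_pred: "(rho n j :: 'k::field falg) = \<partial> n j + \<chi> (Suc n) j \<cdot> rho_pred n j"
  by (cases j) (simp_all add: rho_pred_def)

lemma rho_Suc_fmul:
  "(rho n (Suc i) :: 'k::field falg) \<cdot> c = \<partial> n (Suc i) \<cdot> c + \<chi> (Suc n) (Suc i) \<cdot> (rho n i \<cdot> c)"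
  by (simp add: fmul_add_left fmul_assoc)

lemma rho_chi_above:
  assumes "1 \<le> n" "i < j" "j + 1 \<le> n"
  shows "(rho n i :: 'k::field falg) \<cdot> \<chi> n j \<equiv>\<^sub>L \<chi> (Suc n) (Suc j) \<cdot> rho n i"
  using assms(2)
proof (induction i)
  case 0
  then show ?case using dd_chi_above[of n 0 j] assms by simp
next
  case (Suc i)
  have "(rho n (Suc i) :: 'k falg) \<cdot> \<chi> n j
      = \<partial> n (Suc i) \<cdot> \<chi> n j + \<chi> (Suc n) (Suc i) \<cdot> (rho n i \<cdot> \<chi> n j)"
    by (rule rho_Suc_fmul)
  also have "\<dots> \<equiv>\<^sub>L \<chi> (Suc n) (Suc j) \<cdot> \<partial> n (Suc i) + \<chi> (Suc n) (Suc i) \<cdot> (\<chi> (Suc n) (Suc j) \<cdot> rho n i)"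
    using Suc assms by (intro leib_eq_add dd_chi_above leib_eq_fmul_left) auto
  also have "\<dots> = \<chi> (Suc n) (Suc j) \<cdot> \<partial> n (Suc i) + \<chi> (Suc n) (Suc i) \<cdot> \<chi> (Suc n) (Suc j) \<cdot> rho n i"
    by (simp add: fmul_assoc)
  also have "\<dots> \<equiv>\<^sub>L \<chi> (Suc n) (Suc j) \<cdot> \<partial> n (Suc i) + \<chi> (Suc n) (Suc j) \<cdot> \<chi> (Suc n) (Suc i) \<cdot> rho n i"
    using Suc assms by (intro leib_eq_add leib_eq_refl leib_eq_fmul_right chi_commute) auto
  also have "\<dots> = \<chi> (Suc n) (Suc j) \<cdot> rho n (Suc i)"
    by (simp add: fmul_add_right fmul_assoc)
  finally show ?case .
qed

lemma rho_chi_diag: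
  assumes "i + 1 \<le> n"
  shows "(rho n i :: 'k::field falg) \<cdot> \<chi> n i
    \<equiv>\<^sub>L \<chi> (Suc n) (Suc i) \<cdot> \<chi> (Suc n) i \<cdot> \<partial> n (Suc i) + \<chi> (Suc n) i \<cdot> \<chi> (Suc n) (Suc i) \<cdot> rho_pred n i"
proof (cases i)
  case 0
  then show ?thesis using dd_chi_diag[of 0 n] assms by (simp add: rho_pred_def)
next
  case (Suc k)
  have "(rho n (Suc k) :: 'k falg) \<cdot> \<chi> n (Suc k)
      = \<partial> n (Suc k) \<cdot> \<chi> n (Suc k) + \<chi> (Suc n) (Suc k) \<cdot> (rho n k \<cdot> \<chi> n (Suc k))"
    by (rule rho_Suc_fmul)
  also have "\<dots> \<equiv>\<^sub>L \<chi> (Suc n) (Suc (Suc k)) \<cdot> \<chi> (Suc n) (Suc k) \<cdot> \<partial> n (Suc (Suc k))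
      + \<chi> (Suc n) (Suc k) \<cdot> (\<chi> (Suc n) (Suc (Suc k)) \<cdot> rho n k)"
    using Suc assms by (intro leib_eq_add dd_chi_diag leib_eq_fmul_left rho_chi_above) auto
  finally show ?thesis
    using Suc by (simp add: rho_pred_def fmul_assoc)
qed

lemma rho_chi_below:
  assumes "1 \<le> n" "i \<le> n" "j < i"
  shows "(rho n i :: 'k::field falg) \<cdot> \<chi> n j \<equiv>\<^sub>L \<chi> (Suc n) j \<cdot> rho n i"
  using assms(2,3)
proof (induction i)
  case 0
  then show ?case by simp
next
  case (Suc i)
  consider "j < i" | "j = i" using Suc.prems by linarith
  then show ?case
  proof cases
    case 1
    have "(rho n (Suc i) :: 'k falg) \<cdot> \<chi> n j
        = \<partial> n (Suc i) \<cdot> \<chi> n j + \<chi> (Suc n) (Suc i) \<cdot> (rho n i \<cdot> \<chi> n j)"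
      by (rule rho_Suc_fmul)
    also have "\<dots> \<equiv>\<^sub>L \<chi> (Suc n) j \<cdot> \<partial> n (Suc i) + \<chi> (Suc n) (Suc i) \<cdot> (\<chi> (Suc n) j \<cdot> rho n i)"
      using Suc 1 by (intro leib_eq_add dd_chi_below leib_eq_fmul_left) auto
    also have "\<dots> = \<chi> (Suc n) j \<cdot> \<partial> n (Suc i) + \<chi> (Suc n) (Suc i) \<cdot> \<chi> (Suc n) j \<cdot> rho n i"
      by (simp add: fmul_assoc)
    also have "\<dots> \<equiv>\<^sub>L \<chi> (Suc n) j \<cdot> \<partial> n (Suc i) + \<chi> (Suc n) j \<cdot> \<chi> (Suc n) (Suc i) \<cdot> rho n i"
      using Suc 1 by (intro leib_eq_add leib_eq_refl leib_eq_fmul_right leib_eq_sym[OF chi_commute]) auto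
    also have "\<dots> = \<chi> (Suc n) j \<cdot> rho n (Suc i)"
      by (simp add: fmul_add_right fmul_assoc)
    finally show ?thesis .
  next
    case 2
    let ?x = "\<chi> (Suc n) j :: 'k falg" and ?y = "\<chi> (Suc n) (Suc j) :: 'k falg"
    have j: "j + 1 \<le> n" using Suc.prems 2 by simp
    have "(rho n (Suc j) :: 'k falg) \<cdot> \<chi> n j = \<partial> n (Suc j) \<cdot> \<chi> n j + ?y \<cdot> (rho n j \<cdot> \<chi> n j)"
      by (rule rho_Suc_fmul)
    also have "\<dots> \<equiv>\<^sub>L ?x \<cdot> ?y \<cdot> \<partial> n j
        + ?y \<cdot> (?y \<cdot> ?x \<cdot> \<partial> n (Suc j) + ?x \<cdot> ?y \<cdot> rho_pred n j)"
      using j by (intro leib_eq_add dd_Suc_chi leib_eq_fmul_left rho_chi_diag)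
    also have "\<dots> = ?x \<cdot> ?y \<cdot> \<partial> n j + ?y \<cdot> ?y \<cdot> (?x \<cdot> \<partial> n (Suc j))
        + ?y \<cdot> ?x \<cdot> ?y \<cdot> rho_pred n j"
      by (simp add: fmul_add_right fmul_assoc add.assoc)
    also have "\<dots> \<equiv>\<^sub>L ?x \<cdot> ?y \<cdot> \<partial> n j + \<one> (Suc n) \<cdot> (?x \<cdot> \<partial> n (Suc j))
        + ?x \<cdot> ?y \<cdot> ?x \<cdot> rho_pred n j"
      using j by (intro leib_eq_add leib_eq_refl leib_eq_fmul_right chi_square
          leib_eq_sym[OF chi_braid]) auto
    also have "\<dots> = ?x \<cdot> rho n (Suc j)"
      using j by (simp add: rho_eq_dd_plus_rho_pred[of n j] unit_fmul_gen_fmul fmul_add_right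
          fmul_assoc algebra_simps)
    finally show ?thesis using 2 by simp
  qed
qed

theorem lemma3p8:
  fixes n i j :: nat
  assumes "1 \<le> n" and "i \<le> n" and "j + 1 \<le> n"
  shows "(rho n i :: 'k::field falg) \<cdot> \<chi> n j \<equiv>\<^sub>L
     (if i < j then \<chi> (Suc n) (Suc j) \<cdot> rho n i
      else if j = i then
        \<chi> (Suc n) (Suc i) \<cdot> \<chi> (Suc n) i \<cdot> rho n (Suc i)
        - \<chi> (Suc n) (Suc i) \<cdot> \<chi> (Suc n) i \<cdot> \<chi> (Suc n) (Suc i) \<cdot> rho n i
        + \<chi> (Suc n) i \<cdot> \<chi> (Suc n) (Suc i) \<cdot> rho_pred n i
      else \<chi> (Suc n) j \<cdot> rho n i)"
proof -
  consider "i < j" | "j = i" | "j < i" by linarith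
  then show ?thesis
  proof cases
    case 1
    then show ?thesis using rho_chi_above assms by simp
  next
    case 2
    have "\<chi> (Suc n) (Suc i) \<cdot> \<chi> (Suc n) i \<cdot> rho n (Suc i)
        - \<chi> (Suc n) (Suc i) \<cdot> \<chi> (Suc n) i \<cdot> \<chi> (Suc n) (Suc i) \<cdot> rho n i
      = (\<chi> (Suc n) (Suc i) \<cdot> \<chi> (Suc n) i \<cdot> \<partial> n (Suc i) :: 'k falg)"
      by (simp add: fmul_add_right fmul_assoc)
    then show ?thesis using 2 rho_chi_diag[of i n] assms by simp
  next
    case 3
    then show ?thesis using rho_chi_below assms by simp
  qed
qed

end
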